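(* Assume $\lambda_1,\lambda_2\ge0$ with $\lambda_1\lambda_2=0$. Then there exists a unique Nash equilibrium $\theta^*=(\theta_1^*,\theta_2^* )$ of premium strategies for the two competing reinsurers, and the insurer's equilibrium reinsurance strategy is $p^*=\bar p^{\theta^*}$. Moreover: (1) if $\lambda_i=0$ and $\lambda_j>0$ ($\{i,j\}=\{1,2\}$), then $(\theta_i^*,\theta_j^* )$ is the unique fixed point of $(\theta_i,\theta_j)\mapsto(\varphi_i(\theta_j),\varphi_j(\theta_i))$, where $\varphi_j(x)=\frac{(\delta_0+2\delta_j)x+\delta_0\delta_j}{2x+\delta_0}$; (2) if $\lambda_1=\lambda_2=0$, then \[ \theta_1^*=\frac{\delta_1}2+\frac12\sqrt{\frac{\delta_0+\delta_1}{\delta_0+\delta_2}(\delta_0\delta_1+\delta_0\delta_2+\delta_1\delta_2)},\qquad \theta_2^*=\frac{\delta_2}2+\frac12\sqrt{\frac{\delta_0+\delta_2}{\delta_0+\delta_1}(\delta_0\delta_1+\delta_0\delta_2+\delta_1\delta_2)}. \]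
   Context: Setting: over $[0,T]$, an insurer with loss $dL=\mu dt+\sigma dW$ ($\mu,\sigma>0$, $W$ a standard Brownian motion with augmented natural filtration) and income rate $c>0$ cedes proportions $p_1,p_2$ (deterministic, $p_i\in[0,1]$, $p_1+p_2\in[0,1]$) to Reinsurers 1, 2, who charge variance premiums at rate $\mu p_k+\theta_k\sigma^2p_k^2$ with loadings $\theta_k$ (admissible: deterministic, positive, uniformly bounded functions). Agents have exponential utilities $U_k(x)=-\frac1{\delta_k}e^{-\delta_kx}$, $\delta_k>0$ ($k=0$ insurer, $k=1,2$ reinsurers). Insurer's surplus: $dX_0=(c-\mu-\theta_1\sigma^2p_1^2-\theta_2\sigma^2p_2^2)dt-\sigma(1-p_1-p_2)dW$; given $\theta=(\theta_1,\theta_2)$ the insurer chooses $\bar p^\theta$ maximizing $\mathbb E[U_0(X_0(T))\mid X_0(t)=x]$; explicitly $\bar p_1^\theta=\frac{\delta_0\theta_2}{\delta_0\theta_1+\delta_0\theta_2+2\theta_1\theta_2}$, $\bar p_2^\theta=\frac{\delta_0\theta_1}{\delta_0\theta_1+\delta_0\theta_2+2\theta_1\theta_2}$. Reinsurer surplus under this response: $dX_k=\theta_k\sigma^2(\bar p_k^\theta)^2dt-\sigma\bar p_k^\theta dW$. Reinsurer $i$'s relative performance is $Y_i=X_i-\lambda_jX_j$ ($j\ne i$), and for fixed $\theta_j$ Reinsurer $i$ chooses $\bar\theta_i^{\theta_j}$ maximizing $\mathbb E[U_i(Y_i(T))\mid Y_i(t)=y]$. A Nash equilibrium of premium strategies is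 an admissible fixed point $\theta^*$ of $(\theta_1,\theta_2)\mapsto(\bar\theta_1^{\theta_2},\bar\theta_2^{\theta_1})$. For $i\ne j$ define \[ \varphi_i(x)=\frac{(\delta_0+2\delta_i)x^2+(1+\lambda_j)\delta_0\delta_i\,x}{2x^2+\big((1+2\lambda_j)\delta_0+2\lambda_j\delta_i\big)x+\lambda_j(1+\lambda_j)\delta_0\delta_i},\quad x>0, \] which for $\lambda_j=0$ reduces to $\frac{(\delta_0+2\delta_i)x+\delta_0\delta_i}{2x+\delta_0}$. *)

theory Defs
  imports "HOL-Analysis.Analysis" "HOL-Probability.Probability"
begin

text \<open>Reinsurers are indexed by 1 and 2; the competitor of reinsurer i is 3 - i.
  Strategies (proportions p, loadings theta) are families indexed by nat, of which
  only indices 1 and 2 are used; they are deterministic functions of time.\<close>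

definition other :: "nat \<Rightarrow> nat" where
  "other i = 3 - i"

definition U :: "real \<Rightarrow> real \<Rightarrow> real" where
  "U d x = - (1 / d) * exp (- d * x)"

text \<open>Expectation of f(m + G) where G is centred Gaussian with variance v, i.e. of
  f(m + sqrt v * Z), Z standard normal.  For deterministic integrands, the terminal
  value x + int_t^T a ds - sigma int_t^T b dW is exactly distributed like this with
  m = x + int_t^T a ds and v = sigma^2 int_t^T b^2 ds.\<close>
definition gauss_expect :: "(real \<Rightarrow> real) \<Rightarrow> real \<Rightarrow> real \<Rightarrow> real" where
  "gauss_expect f m v = (\<integral> z. std_normal_density z * f (m + sqrt v * z) \<partial>lborel)"

definition adm_loading :: "real \<Rightarrow> (real \<Rightarrow> real) \<Rightarrow> bool" where
  "adm_loading T f \<longleftrightarrow> set_borel_measurable borel {0..T} f \<and>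
      (\<forall>s\<in>{0..T}. f s > 0) \<and> (\<exists>M. \<forall>s\<in>{0..T}. f s \<le> M)"

definition adm_reins :: "real \<Rightarrow> (nat \<Rightarrow> real \<Rightarrow> real) \<Rightarrow> bool" where
  "adm_reins T p \<longleftrightarrow> set_borel_measurable borel {0..T} (p 1) \<and>
      set_borel_measurable borel {0..T} (p 2) \<and>
      (\<forall>s\<in>{0..T}. 0 \<le> p 1 s \<and> p 1 s \<le> 1 \<and> 0 \<le> p 2 s \<and> p 2 s \<le> 1 \<and>
                    0 \<le> p 1 s + p 2 s \<and> p 1 s + p 2 s \<le> 1)"

text \<open>Insurer's objective E[U_0(X_0(T)) | X_0(t) = x] with
  dX_0 = (c - mu - theta_1 sigma^2 p_1^2 - theta_2 sigma^2 p_2^2) dt - sigma (1 - p_1 - p_2) dW.\<close>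
definition J_ins :: "real \<Rightarrow> real \<Rightarrow> real \<Rightarrow> real \<Rightarrow> real \<Rightarrow>
    (nat \<Rightarrow> real \<Rightarrow> real) \<Rightarrow> (nat \<Rightarrow> real \<Rightarrow> real) \<Rightarrow> real \<Rightarrow> real \<Rightarrow> real" where
  "J_ins c mu sg T d0 theta p t x =
     gauss_expect (U d0)
       (x + integral {t..T} (\<lambda>s. c - mu - theta 1 s * sg\<^sup>2 * (p 1 s)\<^sup>2
                                         - theta 2 s * sg\<^sup>2 * (p 2 s)\<^sup>2))
       (sg\<^sup>2 * integral {t..T} (\<lambda>s. (1 - p 1 s - p 2 s)\<^sup>2))"

definition insurer_optimal :: "real \<Rightarrow> real \<Rightarrow> real \<Rightarrow> real \<Rightarrow> real \<Rightarrow>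
    (nat \<Rightarrow> real \<Rightarrow> real) \<Rightarrow> (nat \<Rightarrow> real \<Rightarrow> real) \<Rightarrow> bool" where
  "insurer_optimal c mu sg T d0 theta p \<longleftrightarrow> adm_reins T p \<and>
     (\<forall>t\<in>{0..T}. \<forall>x. \<forall>q. adm_reins T q \<longrightarrow>
        J_ins c mu sg T d0 theta q t x \<le> J_ins c mu sg T d0 theta p t x)"

definition pbar :: "real \<Rightarrow> (nat \<Rightarrow> real) \<Rightarrow> nat \<Rightarrow> real" where
  "pbar d0 th k = d0 * th (other k) / (d0 * th 1 + d0 * th 2 + 2 * th 1 * th 2)"

definition pbar_strat :: "real \<Rightarrow> (nat \<Rightarrow> real \<Rightarrow> real) \<Rightarrow> nat \<Rightarrow> real \<Rightarrow> real" where
  "pbar_strat d0 theta k s = pbar d0 (\<lambda>l. theta l s) k"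

text \<open>Reinsurer i's objective E[U_i(Y_i(T)) | Y_i(t) = y], Y_i = X_i - lambda_j X_j with
  dX_k = theta_k sigma^2 (bar p_k)^2 dt - sigma bar p_k dW (same W for both).\<close>
definition J_rein :: "real \<Rightarrow> real \<Rightarrow> real \<Rightarrow> (nat \<Rightarrow> real) \<Rightarrow> (nat \<Rightarrow> real) \<Rightarrow>
    (nat \<Rightarrow> real \<Rightarrow> real) \<Rightarrow> nat \<Rightarrow> real \<Rightarrow> real \<Rightarrow> real" where
  "J_rein sg T d0 d lam theta i t y =
     (let j = other i; pb = pbar_strat d0 theta in
      gauss_expect (U (d i))
        (y + integral {t..T} (\<lambda>s. theta i s * sg\<^sup>2 * (pb i s)\<^sup>2
                                    - lam j * (theta j s * sg\<^sup>2 * (pb j s)\<^sup>2)))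
        (sg\<^sup>2 * integral {t..T} (\<lambda>s. (pb i s - lam j * pb j s)\<^sup>2)))"

definition best_response :: "real \<Rightarrow> real \<Rightarrow> real \<Rightarrow> (nat \<Rightarrow> real) \<Rightarrow> (nat \<Rightarrow> real) \<Rightarrow>
    (nat \<Rightarrow> real \<Rightarrow> real) \<Rightarrow> nat \<Rightarrow> (real \<Rightarrow> real) \<Rightarrow> bool" where
  "best_response sg T d0 d lam theta i f \<longleftrightarrow> adm_loading T f \<and>
     (\<forall>t\<in>{0..T}. \<forall>y. \<forall>g. adm_loading T g \<longrightarrow>
        J_rein sg T d0 d lam (theta(i := g)) i t y
          \<le> J_rein sg T d0 d lam (theta(i := f)) i t y)"

definition nash_eq :: "real \<Rightarrow> real \<Rightarrow> real \<Rightarrow> (nat \<Rightarrow> real) \<Rightarrow> (nat \<Rightarrow> real) \<Rightarrow>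
    (nat \<Rightarrow> real \<Rightarrow> real) \<Rightarrow> bool" where
  "nash_eq sg T d0 d lam theta \<longleftrightarrow>
     (\<forall>i\<in>{1,2}. best_response sg T d0 d lam theta i (theta i))"

definition varphi :: "real \<Rightarrow> (nat \<Rightarrow> real) \<Rightarrow> (nat \<Rightarrow> real) \<Rightarrow> nat \<Rightarrow> real \<Rightarrow> real" where
  "varphi d0 d lam i x =
     (let j = other i in
      ((d0 + 2 * d i) * x\<^sup>2 + (1 + lam j) * d0 * d i * x) /
      (2 * x\<^sup>2 + ((1 + 2 * lam j) * d0 + 2 * lam j * d i) * x + lam j * (1 + lam j) * d0 * d i))"

end

theory Submission
  imports Defs
begin

(*
  With deterministic strategies every terminal wealth is Gaussian, so each objective is the
  utility of mean minus delta/2 times variance, i.e. of a time integral of an instantaneous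
  reward.  Pointwise in time the insurer's cost is a convex quadratic in (p_1, p_2), minimised
  by bar p^theta, while reinsurer i's reward, as a function of its own loading u, is a concave
  quadratic in u divided by (e u + m)^2, whose unique maximiser is varphi_i of the rival's
  loading.  Hence best responses are varphi_i(theta_j) almost everywhere, and equilibria are
  almost everywhere the fixed points of (varphi_1, varphi_2), which may be taken constant in time.
  If lambda_i = 0, then varphi_j is a Moebius map of theta_i; eliminating theta_i leaves a cubic
  in theta_j which changes sign on (delta_j, delta_j + delta_0/2) and, by the signs of its
  coefficients, has at most one positive root.  For lambda_1 = lambda_2 = 0 the fixed point
  equations reduce to a quadratic.
*)

(* Not a simp rule: the simplifier rewrites 1 :: nat to Suc 0 first, so it is used by unfolding. *)
lemma other_simps: "other 1 = 2" "other 2 = 1"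
  unfolding other_def by simp_all

lemma ball_one_two: "(\<forall>i\<in>{1 :: nat, 2}. P i) \<longleftrightarrow> P 1 \<and> P 2"
  by auto

lemma other_other: "i \<in> {1, 2} \<Longrightarrow> other (other i) = i"
  unfolding other_def by auto

lemma other_mem: "i \<in> {1, 2} \<Longrightarrow> other i \<in> {1, 2}"
  unfolding other_def by auto

lemma other_neq: "i \<in> {1, 2} \<Longrightarrow> other i \<noteq> i"
  unfolding other_def by auto

lemma Ex1_case_prod_iff:
  "(\<exists>!(a, b). P a b) \<longleftrightarrow> (\<exists>a b. P a b \<and> (\<forall>a' b'. P a' b' \<longrightarrow> a' = a \<and> b' = b))"
  unfolding Ex1_def by auto

lemma Ex1_case_prod_swap: "(\<exists>!(a, b). P a b) \<longleftrightarrow> (\<exists>!(b, a). P a b)"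
  unfolding Ex1_def by auto

section \<open>Pointwise rewards and best loadings\<close>

lemma quadratic_ratio_strict_max:
  fixes A B C e m u :: real
  assumes A: "A \<ge> 0" and B: "B > 0" and C: "C > 0" and e: "e > 0" and m: "m > 0"
    and u: "e * u + m > 0"
  defines "g \<equiv> (B * m + 2 * e * C) / (2 * A * m + B * e)"
  assumes "u \<noteq> g"
  shows "(- A * u\<^sup>2 + B * u - C) / (e * u + m)\<^sup>2 < (- A * g\<^sup>2 + B * g - C) / (e * g + m)\<^sup>2"
proof -
  define N where "N v = - A * v\<^sup>2 + B * v - C" for v
  define K where "K = 2 * A * m + B * e"
  define P where "P = B * m + 2 * e * C"
  have K: "K > 0" unfolding K_def using A B e m by (simp add: add_nonneg_pos)
  have Kg: "K * g = P" unfolding g_def K_def[symmetric] P_def[symmetric] using K by simp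
  have "P > 0" unfolding P_def using B C e m by (simp add: add_pos_pos)
  then have "g > 0" using Kg K by (metis zero_less_mult_pos)
  then have eg: "e * g + m > 0" using e m by (simp add: add_pos_pos)
  define c where "c = N g * e\<^sup>2 + A * (e * g + m)\<^sup>2"
  have "c * K\<^sup>2 = e\<^sup>2 * (- A * (K * g)\<^sup>2 + B * K * (K * g) - C * K\<^sup>2) + A * (e * (K * g) + m * K)\<^sup>2"
    unfolding c_def N_def by algebra
  also have "\<dots> = K * (e\<^sup>2 * B\<^sup>2 * m + e^3 * B * C + 2 * A * e\<^sup>2 * C * m + 2 * A * B * e * m\<^sup>2 + A * m\<^sup>2 * K)"
    unfolding Kg unfolding K_def P_def by algebra
  finally have "c * K\<^sup>2 > 0"
    using A B C e m K by (simp add: add_pos_nonneg)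
  then have c: "c > 0" using K by (simp add: zero_less_mult_iff)
  \<comment> \<open>\<open>K * g = P\<close> is the first-order condition of the ratio, so the cross term vanishes.\<close>
  have "N g * (e * u + m)\<^sup>2 - N u * (e * g + m)\<^sup>2 - c * (u - g)\<^sup>2 = (P - K * g) * (e * g + m) * (g - u)"
    unfolding N_def c_def K_def P_def by algebra
  moreover have "c * (u - g)\<^sup>2 > 0" using c \<open>u \<noteq> g\<close> by simp
  ultimately have "N u * (e * g + m)\<^sup>2 < N g * (e * u + m)\<^sup>2"
    using Kg by simp
  then show ?thesis
    using u eg by (simp add: N_def divide_simps)
qed

definition ceded_share :: "real \<Rightarrow> real \<Rightarrow> real \<Rightarrow> real" where
  "ceded_share d0 u x = d0 * x / (d0 * u + d0 * x + 2 * u * x)"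

(* Reinsurer i's drift minus d_i/2 times its squared volatility, per unit sg^2, when it
   charges u and its rival charges x; here dl = d_i and lm = lambda_j (see J_rein_eq). *)
definition rein_reward :: "real \<Rightarrow> real \<Rightarrow> real \<Rightarrow> real \<Rightarrow> real \<Rightarrow> real" where
  "rein_reward d0 dl lm u x =
     u * (ceded_share d0 u x)\<^sup>2 - lm * (x * (ceded_share d0 x u)\<^sup>2)
     - dl / 2 * (ceded_share d0 u x - lm * ceded_share d0 x u)\<^sup>2"

definition best_loading :: "real \<Rightarrow> real \<Rightarrow> real \<Rightarrow> real \<Rightarrow> real" where
  "best_loading d0 dl lm x =
     ((d0 + 2 * dl) * x\<^sup>2 + (1 + lm) * d0 * dl * x) /
     (2 * x\<^sup>2 + ((1 + 2 * lm) * d0 + 2 * lm * dl) * x + lm * (1 + lm) * d0 * dl)"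

lemma varphi_eq_best_loading: "varphi d0 d lam i = best_loading d0 (d i) (lam (other i))"
  unfolding varphi_def best_loading_def Let_def by (rule ext) simp

lemma ceded_share_bounds:
  assumes "d0 > 0" "u > 0" "x > 0"
  shows "0 \<le> ceded_share d0 u x" "ceded_share d0 u x \<le> 1"
  using assms unfolding ceded_share_def by (simp_all add: add_pos_pos)

lemma best_loading_denom_pos:
  fixes d0 dl lm x :: real
  assumes "d0 > 0" "dl > 0" "lm \<ge> 0" "x > 0"
  shows "2 * x\<^sup>2 + ((1 + 2 * lm) * d0 + 2 * lm * dl) * x + lm * (1 + lm) * d0 * dl > 0"
  using assms by (intro add_pos_nonneg) (auto intro!: mult_nonneg_nonneg add_nonneg_nonneg)

lemma best_loading_pos:
  assumes "d0 > 0" "dl > 0" "lm \<ge> 0" "x > 0"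
  shows "best_loading d0 dl lm x > 0"
  unfolding best_loading_def using assms best_loading_denom_pos[OF assms]
  by (intro divide_pos_pos add_pos_nonneg) auto

lemma best_loading_le:
  assumes "d0 > 0" "dl > 0" "lm \<ge> 0" "x > 0"
  shows "best_loading d0 dl lm x \<le> (d0 + 2 * dl) / 2 + (1 + lm) * dl"
proof -
  define M where "M = (d0 + 2 * dl) / 2 + (1 + lm) * dl"
  have "M * (2 * x\<^sup>2 + d0 * x) - ((d0 + 2 * dl) * x\<^sup>2 + (1 + lm) * d0 * dl * x)
      = (1 + lm) * dl * 2 * x\<^sup>2 + (d0 + 2 * dl) / 2 * d0 * x"
    unfolding M_def by (simp add: algebra_simps power2_eq_square)
  moreover have "(1 + lm) * dl * 2 * x\<^sup>2 + (d0 + 2 * dl) / 2 * d0 * x \<ge> 0"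
    using assms by simp
  ultimately have "(d0 + 2 * dl) * x\<^sup>2 + (1 + lm) * d0 * dl * x \<le> M * (2 * x\<^sup>2 + d0 * x)"
    by linarith
  also have "\<dots> \<le> M * (2 * x\<^sup>2 + ((1 + 2 * lm) * d0 + 2 * lm * dl) * x + lm * (1 + lm) * d0 * dl)"
    unfolding M_def using assms by (intro mult_left_mono) (simp_all add: algebra_simps)
  finally show ?thesis
    unfolding best_loading_def M_def[symmetric] using best_loading_denom_pos[OF assms]
    by (simp add: divide_le_eq)
qed

lemma rein_reward_eq_ratio:
  fixes d0 dl lm x v :: real
  defines "A \<equiv> lm * x + dl * lm\<^sup>2 / 2" and "B \<equiv> x\<^sup>2 + dl * lm * x" and "C \<equiv> dl * x\<^sup>2 / 2"
    and "e \<equiv> d0 + 2 * x" and "m \<equiv> d0 * x"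
  assumes "d0 > 0" "x > 0" "v > 0"
  shows "rein_reward d0 dl lm v x = d0\<^sup>2 * ((- A * v\<^sup>2 + B * v - C) / (e * v + m)\<^sup>2)"
proof -
  have shares: "ceded_share d0 v x = d0 * x / (e * v + m)" "ceded_share d0 x v = d0 * v / (e * v + m)"
    unfolding ceded_share_def e_def m_def by (simp_all add: algebra_simps)
  have "e * v + m > 0" unfolding e_def m_def using assms by (simp add: add_pos_pos)
  moreover have "w * (a / D)\<^sup>2 - lm * (x * (b / D)\<^sup>2) - dl / 2 * (a / D - lm * (b / D))\<^sup>2
      = (w * a\<^sup>2 - lm * x * b\<^sup>2 - dl / 2 * (a - lm * b)\<^sup>2) / D\<^sup>2" if "D \<noteq> 0" for w a b D :: real
    using that by (simp add: field_simps power2_eq_square)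
  ultimately have "rein_reward d0 dl lm v x
      = (v * (d0 * x)\<^sup>2 - lm * x * (d0 * v)\<^sup>2 - dl / 2 * (d0 * x - lm * (d0 * v))\<^sup>2) / (e * v + m)\<^sup>2"
    unfolding rein_reward_def shares by simp
  also have "v * (d0 * x)\<^sup>2 - lm * x * (d0 * v)\<^sup>2 - dl / 2 * (d0 * x - lm * (d0 * v))\<^sup>2
      = d0\<^sup>2 * (- A * v\<^sup>2 + B * v - C)"
    unfolding A_def B_def C_def by (simp add: algebra_simps power2_eq_square)
  finally show ?thesis by simp
qed

lemma rein_reward_less_best:
  assumes d0: "d0 > 0" and dl: "dl > 0" and lm: "lm \<ge> 0" and x: "x > 0" and u: "u > 0"
    and "u \<noteq> best_loading d0 dl lm x"
  shows "rein_reward d0 dl lm u x < rein_reward d0 dl lm (best_loading d0 dl lm x) x"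
proof -
  define A where "A = lm * x + dl * lm\<^sup>2 / 2"
  define B where "B = x\<^sup>2 + dl * lm * x"
  define C where "C = dl * x\<^sup>2 / 2"
  define e where "e = d0 + 2 * x"
  define m where "m = d0 * x"
  note ratio = rein_reward_eq_ratio[OF d0 x, of _ dl lm, folded A_def B_def C_def e_def m_def]
  have best: "best_loading d0 dl lm x = (B * m + 2 * e * C) / (2 * A * m + B * e)"
  proof -
    have "2 * A * m + B * e = x * (2 * x\<^sup>2 + ((1 + 2 * lm) * d0 + 2 * lm * dl) * x + lm * (1 + lm) * d0 * dl)"
      "B * m + 2 * e * C = x * ((d0 + 2 * dl) * x\<^sup>2 + (1 + lm) * d0 * dl * x)"
      unfolding A_def B_def C_def e_def m_def by (simp_all add: algebra_simps power2_eq_square)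
    then show ?thesis unfolding best_loading_def using x by simp
  qed
  have "(- A * u\<^sup>2 + B * u - C) / (e * u + m)\<^sup>2
      < (- A * (best_loading d0 dl lm x)\<^sup>2 + B * best_loading d0 dl lm x - C) / (e * best_loading d0 dl lm x + m)\<^sup>2"
    unfolding best using assms
    by (intro quadratic_ratio_strict_max) (auto simp: A_def B_def C_def e_def m_def add_pos_pos add_pos_nonneg best)
  then show ?thesis
    unfolding ratio[OF u] ratio[OF best_loading_pos[OF d0 dl lm x]]
    by (rule mult_strict_left_mono) (use d0 in simp)
qed

lemma rein_reward_le_best:
  assumes "d0 > 0" "dl > 0" "lm \<ge> 0" "x > 0" "u > 0"
  shows "rein_reward d0 dl lm u x \<le> rein_reward d0 dl lm (best_loading d0 dl lm x) x"
  using rein_reward_less_best[OF assms] by (cases "u = best_loading d0 dl lm x") auto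

section \<open>Fixed points of the best-loading maps\<close>

lemma best_loading_zero_eq_iff:
  assumes "d0 > 0" "a > 0"
  shows "b = best_loading d0 dp 0 a \<longleftrightarrow> a * (d0 + 2 * dp - 2 * b) = d0 * (b - dp)"
proof -
  have "best_loading d0 dp 0 a = (a * ((d0 + 2 * dp) * a + d0 * dp)) / (a * (2 * a + d0))"
    unfolding best_loading_def by (simp add: algebra_simps power2_eq_square)
  also have "\<dots> = ((d0 + 2 * dp) * a + d0 * dp) / (2 * a + d0)"
    using assms by simp
  finally have "b = best_loading d0 dp 0 a \<longleftrightarrow> b * (2 * a + d0) = (d0 + 2 * dp) * a + d0 * dp"
    using assms by (metis add_pos_pos eq_divide_eq mult_pos_pos zero_less_numeral less_irrefl)
  moreover have "b * (2 * a + d0) - ((d0 + 2 * dp) * a + d0 * dp) = d0 * (b - dp) - a * (d0 + 2 * dp - 2 * b)"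
    by (simp add: algebra_simps)
  ultimately show ?thesis by (metis eq_iff_diff_eq_0)
qed

lemma cubic_pos_root_unique:
  fixes a c2 c1 c0 b b' :: real
  assumes a: "a > 0" and c0: "c0 \<ge> 0" and c1: "c2 > 0 \<Longrightarrow> c1 \<ge> 0"
    and "b > 0" "b' > 0"
    and "- a * b ^ 3 + c2 * b\<^sup>2 + c1 * b + c0 = 0" "- a * b' ^ 3 + c2 * b'\<^sup>2 + c1 * b' + c0 = 0"
  shows "b = b'"
proof -
  \<comment> \<open>\<open>F(y) / y\<close> if \<open>c2 \<le> 0\<close>, and \<open>F(y) / y\<^sup>2\<close> otherwise, is strictly decreasing for \<open>y > 0\<close>.\<close>
  have False if "0 < y" "y < z"
    and y: "- a * y ^ 3 + c2 * y\<^sup>2 + c1 * y + c0 = 0" and z: "- a * z ^ 3 + c2 * z\<^sup>2 + c1 * z + c0 = 0"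
    for y z :: real
  proof (cases "c2 \<le> 0")
    case True
    have "- a * y\<^sup>2 + c2 * y + c1 + c0 / y = 0" "- a * z\<^sup>2 + c2 * z + c1 + c0 / z = 0"
      using y z that by (simp_all add: field_simps power2_eq_square power3_eq_cube)
    moreover have "- a * z\<^sup>2 < - a * y\<^sup>2" using a that by (simp add: power_strict_mono)
    moreover have "c2 * z \<le> c2 * y" using True that by (simp add: mult_left_mono_neg)
    moreover have "c0 / z \<le> c0 / y" using c0 that by (simp add: divide_left_mono)
    ultimately show False by linarith
  next
    case False
    have "- a * y + c2 + c1 / y + c0 / y\<^sup>2 = 0" "- a * z + c2 + c1 / z + c0 / z\<^sup>2 = 0"
      using y z that by (simp_all add: field_simps power2_eq_square power3_eq_cube)
    moreover have "- a * z < - a * y" using a that by simp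
    moreover have "c1 / z \<le> c1 / y" using c1 False that by (simp add: divide_left_mono)
    moreover have "c0 / z\<^sup>2 \<le> c0 / y\<^sup>2" using c0 that by (simp add: divide_left_mono power_mono)
    ultimately show False by linarith
  qed
  then show ?thesis using assms by (metis linorder_neqE_linordered_idom)
qed

(* The fixed point equations with a eliminated by best_loading_zero_eq_iff. *)
definition fixpoint_cubic :: "real \<Rightarrow> real \<Rightarrow> real \<Rightarrow> real \<Rightarrow> real \<Rightarrow> real" where
  "fixpoint_cubic d0 dl dp lm b =
     ((d0 + 2 * dl) * b\<^sup>2 + (1 + lm) * d0 * dl * b) * (d0 + 2 * dp - 2 * b)
     - d0 * (b - dp) * (2 * b\<^sup>2 + ((1 + 2 * lm) * d0 + 2 * lm * dl) * b + lm * (1 + lm) * d0 * dl)"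

lemma fixpoint_imp_cubic_root:
  assumes d0: "d0 > 0" and dl: "dl > 0" and lm: "lm \<ge> 0" and a: "a > 0" and b: "b > 0"
    and "a = best_loading d0 dl lm b" "b = best_loading d0 dp 0 a"
  shows "fixpoint_cubic d0 dl dp lm b = 0"
proof -
  define N where "N = (d0 + 2 * dl) * b\<^sup>2 + (1 + lm) * d0 * dl * b"
  define D where "D = 2 * b\<^sup>2 + ((1 + 2 * lm) * d0 + 2 * lm * dl) * b + lm * (1 + lm) * d0 * dl"
  have "N = a * D"
    using assms(6) best_loading_denom_pos[OF d0 dl lm b]
    unfolding best_loading_def N_def[symmetric] D_def[symmetric] by simp
  moreover have "d0 * (b - dp) = a * (d0 + 2 * dp - 2 * b)"
    using assms(7) best_loading_zero_eq_iff[OF d0 a] by simp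
  ultimately show ?thesis
    unfolding fixpoint_cubic_def N_def[symmetric] D_def[symmetric] by simp
qed

lemma cubic_root_imp_fixpoint:
  assumes d0: "d0 > 0" and dl: "dl > 0" and lm: "lm \<ge> 0"
    and b: "dp < b" "b < dp + d0 / 2" "b > 0" and root: "fixpoint_cubic d0 dl dp lm b = 0"
  shows "\<exists>a > 0. a = best_loading d0 dl lm b \<and> b = best_loading d0 dp 0 a"
proof -
  define D where "D = 2 * b\<^sup>2 + ((1 + 2 * lm) * d0 + 2 * lm * dl) * b + lm * (1 + lm) * d0 * dl"
  define a where "a = d0 * (b - dp) / (d0 + 2 * dp - 2 * b)"
  have r: "d0 + 2 * dp - 2 * b > 0" using b by simp
  have a: "a > 0" unfolding a_def using b r d0 by simp
  have ar: "a * (d0 + 2 * dp - 2 * b) = d0 * (b - dp)" unfolding a_def using r by simp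
  have "((d0 + 2 * dl) * b\<^sup>2 + (1 + lm) * d0 * dl * b) * (d0 + 2 * dp - 2 * b) = d0 * (b - dp) * D"
    using root unfolding fixpoint_cubic_def D_def by simp
  also have "\<dots> = (a * D) * (d0 + 2 * dp - 2 * b)"
    unfolding ar[symmetric] by (simp add: algebra_simps)
  finally have "(d0 + 2 * dl) * b\<^sup>2 + (1 + lm) * d0 * dl * b = a * D"
    using r by simp
  then have "a = best_loading d0 dl lm b"
    using best_loading_denom_pos[OF d0 dl lm \<open>b > 0\<close>]
    unfolding best_loading_def D_def by (simp add: eq_divide_eq)
  moreover have "b = best_loading d0 dp 0 a"
    using best_loading_zero_eq_iff[OF d0 a] ar by simp
  ultimately show ?thesis using a by blast
qed

lemma fixpoint_cubic_root_exists:
  assumes "d0 > 0" "dl > 0" "dp > 0" "lm \<ge> 0"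
  shows "\<exists>b. dp < b \<and> b < dp + d0 / 2 \<and> fixpoint_cubic d0 dl dp lm b = 0"
proof -
  have left: "fixpoint_cubic d0 dl dp lm dp > 0"
    unfolding fixpoint_cubic_def using assms by (simp add: add_pos_nonneg)
  have right: "fixpoint_cubic d0 dl dp lm (dp + d0 / 2) < 0"
    unfolding fixpoint_cubic_def using best_loading_denom_pos[of d0 dl lm "dp + d0 / 2"] assms by simp
  have "\<exists>b \<ge> dp. b \<le> dp + d0 / 2 \<and> fixpoint_cubic d0 dl dp lm b = 0"
    using left right assms(1) unfolding fixpoint_cubic_def
    by (intro IVT2 allI impI continuous_intros) auto
  then obtain b where b: "dp \<le> b" "b \<le> dp + d0 / 2" "fixpoint_cubic d0 dl dp lm b = 0" by blast
  then have "b \<noteq> dp" "b \<noteq> dp + d0 / 2" using left right by auto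
  with b show ?thesis by (intro exI[of _ b]) auto
qed

lemma fixpoint_cubic_root_unique:
  assumes d0: "d0 > 0" and dl: "dl > 0" and dp: "dp > 0" and lm: "lm \<ge> 0"
    and "b > 0" "b' > 0" "fixpoint_cubic d0 dl dp lm b = 0" "fixpoint_cubic d0 dl dp lm b' = 0"
  shows "b = b'"
proof -
  define c2 where "c2 = 4 * dp * (d0 + dl) - 2 * lm * d0 * (2 * dl + d0)"
  define c1 where "c1 = (1 - lm\<^sup>2) * dl * d0\<^sup>2 + (1 + 2 * lm) * dp * d0 * (2 * dl + d0)"
  define c0 where "c0 = d0 * (lm * (1 + lm) * d0 * dl) * dp"
  have cubic: "fixpoint_cubic d0 dl dp lm y = - (4 * (d0 + dl)) * y ^ 3 + c2 * y\<^sup>2 + c1 * y + c0" for y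
    unfolding fixpoint_cubic_def c2_def c1_def c0_def
    by (simp add: algebra_simps power2_eq_square power3_eq_cube)
  have c1: "c1 \<ge> 0" if "c2 > 0"
  proof -
    have "2 * dp * (d0 + dl) > lm * d0 * (2 * dl + d0)" using that unfolding c2_def by (simp add: algebra_simps)
    moreover have "dp * (2 * dl + d0) \<ge> dp * (d0 + dl)" using dp dl by simp
    ultimately have "2 * (dp * (2 * dl + d0)) > lm * d0 * (2 * dl + d0)" by linarith
    moreover have "lm * d0 * (2 * dl + d0) \<ge> lm * d0 * (2 * dl)" using lm d0 by (simp add: mult_left_mono)
    ultimately have "dp * (2 * dl + d0) \<ge> lm * d0 * dl" by linarith
    then have "(1 + 2 * lm) * d0 * (dp * (2 * dl + d0)) \<ge> (1 + 2 * lm) * d0 * (lm * d0 * dl)"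
      using lm d0 by (intro mult_left_mono) auto
    moreover have "(1 - lm\<^sup>2) * dl * d0\<^sup>2 + (1 + 2 * lm) * d0 * (lm * d0 * dl) = (1 + lm + lm\<^sup>2) * dl * d0\<^sup>2"
      by (simp add: algebra_simps power2_eq_square)
    moreover have "(1 + lm + lm\<^sup>2) * dl * d0\<^sup>2 \<ge> 0" using lm dl d0 by simp
    ultimately show ?thesis unfolding c1_def by (simp add: algebra_simps)
  qed
  have c0: "c0 \<ge> 0" unfolding c0_def using assms by simp
  have root: "- (4 * (d0 + dl)) * y ^ 3 + c2 * y\<^sup>2 + c1 * y + c0 = 0"
    if "fixpoint_cubic d0 dl dp lm y = 0" for y
    using that unfolding cubic .
  have "4 * (d0 + dl) > 0" using d0 dl by simp
  from cubic_pos_root_unique[OF this c0 c1 assms(5,6) root[OF assms(7)] root[OF assms(8)]]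
  show ?thesis .
qed

lemma best_loading_fixpoint_unique:
  assumes d0: "d0 > 0" and dl: "dl > 0" and dp: "dp > 0" and lm: "lm \<ge> 0"
  shows "\<exists>!(a, b). a > 0 \<and> b > 0 \<and> a = best_loading d0 dl lm b \<and> b = best_loading d0 dp 0 a"
proof -
  obtain b where b: "dp < b" "b < dp + d0 / 2" "fixpoint_cubic d0 dl dp lm b = 0"
    using fixpoint_cubic_root_exists[OF assms] by blast
  then have "b > 0" using dp by simp
  then obtain a where a: "a > 0" "a = best_loading d0 dl lm b" "b = best_loading d0 dp 0 a"
    using cubic_root_imp_fixpoint[OF d0 dl lm b(1,2) _ b(3)] by blast
  moreover have "a' = a \<and> b' = b"
    if fp: "a' > 0" "b' > 0" "a' = best_loading d0 dl lm b'" "b' = best_loading d0 dp 0 a'" for a' b'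
  proof -
    have "b' = b"
      using fixpoint_cubic_root_unique[OF assms fp(2) \<open>b > 0\<close> fixpoint_imp_cubic_root[OF d0 dl lm fp] b(3)] .
    with fp(3) a(2) show ?thesis by simp
  qed
  ultimately show ?thesis
    unfolding Ex1_case_prod_iff using \<open>b > 0\<close> by blast
qed

lemma best_loading_fixpoint_explicit:
  assumes d0: "d0 > 0" and d1: "d1 > 0" and d2: "d2 > 0" and a: "a > 0" and b: "b > 0"
    and "a = best_loading d0 d1 0 b" "b = best_loading d0 d2 0 a"
  shows "b = d2 / 2 + 1 / 2 * sqrt ((d0 + d2) / (d0 + d1) * (d0 * d1 + d0 * d2 + d1 * d2))"
proof -
  have "b * (d0 + 2 * d1 - 2 * a) = d0 * (a - d1)" "a * (d0 + 2 * d2 - 2 * b) = d0 * (b - d2)"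
    using assms(6,7) best_loading_zero_eq_iff[OF d0 a] best_loading_zero_eq_iff[OF d0 b] by blast+
  then have quad: "(d0 + d1) * (2 * b - d2)\<^sup>2 = (d0 + d2) * (d0 * d1 + d0 * d2 + d1 * d2)"
    by algebra
  have "(d0 + d1) * (2 * b - d2)\<^sup>2 - (d0 + d1) * d2\<^sup>2 = d0\<^sup>2 * (d1 + d2) + 2 * d0 * d1 * d2"
    unfolding quad by (simp add: algebra_simps power2_eq_square)
  also have "\<dots> > 0" using d0 d1 d2 by (simp add: add_pos_pos)
  finally have "d2\<^sup>2 < (2 * b - d2)\<^sup>2" using d0 d1 by simp
  then have "\<bar>d2\<bar> < \<bar>2 * b - d2\<bar>" by (metis abs_le_square_iff not_le)
  then have "2 * b - d2 > 0" using b d2 by linarith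
  moreover have "(2 * b - d2)\<^sup>2 = (d0 + d2) / (d0 + d1) * (d0 * d1 + d0 * d2 + d1 * d2)"
    using quad d0 d1 by (simp add: field_simps)
  ultimately have "sqrt ((d0 + d2) / (d0 + d1) * (d0 * d1 + d0 * d2 + d1 * d2)) = 2 * b - d2"
    by (metis real_sqrt_abs abs_of_pos)
  then show ?thesis by linarith
qed

section \<open>Exponential utility of Gaussian wealth and bounded integrands\<close>

lemma U_le_iff:
  assumes "d > 0"
  shows "U d x \<le> U d y \<longleftrightarrow> x \<le> y"
  using assms unfolding U_def by (simp add: divide_le_cancel)

lemma gauss_expect_U:
  assumes d: "d > 0" and v: "v \<ge> 0"
  shows "gauss_expect (U d) m v = U d (m - d / 2 * v)"
proof -
  have "std_normal_density z * U d (m + sqrt v * z) = U d (m - d / 2 * v) * normal_density (- d * sqrt v) 1 z"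
    for z
  proof -
    have "exp (- (z\<^sup>2) / 2) * exp (- d * (m + sqrt v * z))
        = exp (- d * (m - d / 2 * v)) * exp (- ((z - (- d * sqrt v))\<^sup>2) / 2)"
      unfolding mult_exp_exp using v by (simp add: field_simps power2_eq_square)
    then show ?thesis
      unfolding std_normal_density_def normal_density_def U_def by simp
  qed
  then show ?thesis unfolding gauss_expect_def by simp
qed

lemma gauss_expect_U_integral:
  fixes a b :: "real \<Rightarrow> real"
  assumes d: "d > 0" and a: "a integrable_on S" and b: "b integrable_on S" and b0: "\<forall>s\<in>S. b s \<ge> 0"
  shows "gauss_expect (U d) (y + integral S a) (integral S b) = U d (y + integral S (\<lambda>s. a s - d / 2 * b s))"
proof -
  have "integral S b \<ge> 0" using integral_nonneg[OF b] b0 by blast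
  then have "gauss_expect (U d) (y + integral S a) (integral S b) = U d (y + (integral S a - d / 2 * integral S b))"
    using gauss_expect_U[OF d] by (simp add: add_diff_eq)
  also have "integral S a - d / 2 * integral S b = integral S (\<lambda>s. a s - d / 2 * b s)"
    using integral_diff[OF a integrable_on_mult_right[OF b, of "d / 2"]] integral_mult[OF b, of "d / 2"]
    by simp
  finally show ?thesis .
qed

definition bounded_borel_on :: "real set \<Rightarrow> (real \<Rightarrow> real) \<Rightarrow> bool" where
  "bounded_borel_on S f \<longleftrightarrow> f \<in> borel_measurable (restrict_space borel S) \<and> (\<exists>M. \<forall>s\<in>S. \<bar>f s\<bar> \<le> M)"

lemma bounded_borel_onI:
  assumes "f \<in> borel_measurable (restrict_space borel S)" "\<And>s. s \<in> S \<Longrightarrow> \<bar>f s\<bar> \<le> M"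
  shows "bounded_borel_on S f"
  using assms unfolding bounded_borel_on_def by blast

lemma bounded_borel_onD:
  assumes "bounded_borel_on S f"
  shows "f \<in> borel_measurable (restrict_space borel S)" "\<exists>M. \<forall>s\<in>S. \<bar>f s\<bar> \<le> M"
  using assms unfolding bounded_borel_on_def by blast+

lemma bounded_borel_on_const [intro]: "bounded_borel_on S (\<lambda>s. c)"
  by (rule bounded_borel_onI[where M = "\<bar>c\<bar>"]) auto

lemma bounded_borel_on_add [intro]:
  assumes f: "bounded_borel_on S f" and g: "bounded_borel_on S g"
  shows "bounded_borel_on S (\<lambda>s. f s + g s)"
proof -
  obtain Mf Mg where "\<forall>s\<in>S. \<bar>f s\<bar> \<le> Mf" "\<forall>s\<in>S. \<bar>g s\<bar> \<le> Mg"
    using bounded_borel_onD(2)[OF f] bounded_borel_onD(2)[OF g] by blast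
  then have "\<bar>f s + g s\<bar> \<le> Mf + Mg" if "s \<in> S" for s
    using that abs_triangle_ineq[of "f s" "g s"] by fastforce
  then show ?thesis
    by (rule bounded_borel_onI[OF borel_measurable_add[OF bounded_borel_onD(1)[OF f] bounded_borel_onD(1)[OF g]]])
qed

lemma bounded_borel_on_uminus [intro]:
  assumes "bounded_borel_on S f"
  shows "bounded_borel_on S (\<lambda>s. - f s)"
  using assms unfolding bounded_borel_on_def by simp

lemma bounded_borel_on_diff [intro]:
  assumes "bounded_borel_on S f" "bounded_borel_on S g"
  shows "bounded_borel_on S (\<lambda>s. f s - g s)"
  using bounded_borel_on_add[OF assms(1) bounded_borel_on_uminus[OF assms(2)]] by simp

lemma bounded_borel_on_mult [intro]:
  assumes f: "bounded_borel_on S f" and g: "bounded_borel_on S g"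
  shows "bounded_borel_on S (\<lambda>s. f s * g s)"
proof -
  obtain Mf Mg where Mf: "\<forall>s\<in>S. \<bar>f s\<bar> \<le> Mf" and Mg: "\<forall>s\<in>S. \<bar>g s\<bar> \<le> Mg"
    using bounded_borel_onD(2)[OF f] bounded_borel_onD(2)[OF g] by blast
  have "\<bar>f s * g s\<bar> \<le> Mf * Mg" if "s \<in> S" for s
  proof -
    have "\<bar>f s\<bar> \<le> Mf" "\<bar>g s\<bar> \<le> Mg" using Mf Mg that by auto
    moreover have "0 \<le> Mf" using \<open>\<bar>f s\<bar> \<le> Mf\<close> abs_ge_zero order_trans by blast
    ultimately show ?thesis unfolding abs_mult by (simp add: mult_mono)
  qed
  then show ?thesis
    by (rule bounded_borel_onI[OF borel_measurable_times[OF bounded_borel_onD(1)[OF f] bounded_borel_onD(1)[OF g]]])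
qed

lemma bounded_borel_on_power [intro]:
  assumes "bounded_borel_on S f"
  shows "bounded_borel_on S (\<lambda>s. f s ^ n)"
proof (induction n)
  case (Suc n)
  show ?case using bounded_borel_on_mult[OF assms Suc.IH] by simp
qed auto

lemma bounded_borel_on_set_integrable:
  assumes "bounded_borel_on {a..b} f"
  shows "set_integrable lborel {a..b} f"
proof -
  obtain M where M: "\<forall>s\<in>{a..b}. \<bar>f s\<bar> \<le> M" and f: "f \<in> borel_measurable (restrict_space borel {a..b})"
    using assms unfolding bounded_borel_on_def by blast
  have "integrable lborel (\<lambda>s. M * indicator {a..b} s)"
    by (intro integrable_mult_right integrable_real_indicator) (auto simp: emeasure_lborel_Icc_eq)
  moreover have "(\<lambda>s. indicator {a..b} s *\<^sub>R f s) \<in> borel_measurable lborel"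
    using f by (subst (asm) borel_measurable_restrict_space_iff) auto
  moreover have "norm (indicator {a..b} s *\<^sub>R f s) \<le> norm (M * indicator {a..b} s)" for s
    using M by (cases "s \<in> {a..b}") (auto intro: abs_le_D1[THEN order_trans] order_trans[OF _ abs_ge_self])
  ultimately show ?thesis
    unfolding set_integrable_def by (blast intro: Bochner_Integration.integrable_bound)
qed

lemma bounded_borel_on_integrable_on:
  assumes "bounded_borel_on {a..b} f" "{c..d} \<subseteq> {a..b}"
  shows "f integrable_on {c..d}"
  using set_integrable_subset[OF bounded_borel_on_set_integrable[OF assms(1)] _ assms(2)]
  by (simp add: set_borel_integral_eq_integral)

lemma bounded_borel_on_AE_eq_0:
  assumes f: "bounded_borel_on {a..b} f" and nonneg: "\<forall>s\<in>{a..b}. f s \<ge> 0" and "integral {a..b} f \<le> 0"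
  shows "AE s in lborel. s \<in> {a..b} \<longrightarrow> f s = 0"
proof -
  have int: "integrable lborel (\<lambda>s. indicator {a..b} s *\<^sub>R f s)"
    using bounded_borel_on_set_integrable[OF f] unfolding set_integrable_def .
  have nn: "AE s in lborel. 0 \<le> indicator {a..b} s *\<^sub>R f s"
    using nonneg by (intro AE_I2) (simp add: indicator_def)
  have "integral\<^sup>L lborel (\<lambda>s. indicator {a..b} s *\<^sub>R f s) = integral {a..b} f"
    using set_borel_integral_eq_integral(2)[OF bounded_borel_on_set_integrable[OF f]]
    unfolding set_lebesgue_integral_def .
  then have "integral\<^sup>L lborel (\<lambda>s. indicator {a..b} s *\<^sub>R f s) = 0"
    using assms(3) integral_nonneg_AE[OF nn] by linarith
  then have "AE s in lborel. indicator {a..b} s *\<^sub>R f s = 0"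
    using integral_nonneg_eq_0_iff_AE[OF int nn] by simp
  then show ?thesis by eventually_elim (auto simp: indicator_def)
qed

section \<open>Admissible strategies\<close>

lemma set_borel_measurable_iff_restrict_space:
  fixes f :: "real \<Rightarrow> real"
  assumes "S \<in> sets borel"
  shows "set_borel_measurable borel S f \<longleftrightarrow> f \<in> borel_measurable (restrict_space borel S)"
  unfolding set_borel_measurable_def using assms
  by (simp add: borel_measurable_restrict_space_iff)

lemma adm_loading_iff:
  "adm_loading T f \<longleftrightarrow> bounded_borel_on {0..T} f \<and> (\<forall>s\<in>{0..T}. f s > 0)"
proof -
  have "(\<exists>M. \<forall>s\<in>{0..T}. f s \<le> M) \<longleftrightarrow> (\<exists>M. \<forall>s\<in>{0..T}. \<bar>f s\<bar> \<le> M)" if "\<forall>s\<in>{0..T}. f s > 0"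
  proof -
    have "\<And>s. s \<in> {0..T} \<Longrightarrow> \<bar>f s\<bar> = f s" using that by (simp add: less_imp_le)
    then show ?thesis by simp
  qed
  then show ?thesis
    unfolding adm_loading_def bounded_borel_on_def set_borel_measurable_iff_restrict_space[OF borel_closed[OF closed_atLeastAtMost]]
    by blast
qed

lemma adm_loading_const: "a > 0 \<Longrightarrow> adm_loading T (\<lambda>s. a)"
  unfolding adm_loading_iff by auto

lemma adm_reins_bounded_borel:
  assumes "adm_reins T q" "k \<in> {1, 2}"
  shows "bounded_borel_on {0..T} (q k)"
  using assms
  unfolding adm_reins_def set_borel_measurable_iff_restrict_space[OF borel_closed[OF closed_atLeastAtMost]]
  by (auto intro!: bounded_borel_onI[where M = 1])

lemma bounded_borel_ceded_share:
  assumes d0: "d0 > 0" and u: "adm_loading T u" and x: "adm_loading T x"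
  shows "bounded_borel_on {0..T} (\<lambda>s. ceded_share d0 (u s) (x s))"
proof (rule bounded_borel_onI[where M = 1])
  have [measurable]: "u \<in> borel_measurable (restrict_space borel {0..T})" "x \<in> borel_measurable (restrict_space borel {0..T})"
    using u x unfolding adm_loading_iff bounded_borel_on_def by blast+
  show "(\<lambda>s. ceded_share d0 (u s) (x s)) \<in> borel_measurable (restrict_space borel {0..T})"
    unfolding ceded_share_def by measurable
  show "\<bar>ceded_share d0 (u s) (x s)\<bar> \<le> 1" if "s \<in> {0..T}" for s
    using ceded_share_bounds[OF d0] u x that unfolding adm_loading_iff by auto
qed

lemma bounded_borel_rein_reward:
  assumes "d0 > 0" "adm_loading T u" "adm_loading T x"
  shows "bounded_borel_on {0..T} (\<lambda>s. rein_reward d0 dl lm (u s) (x s))"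
proof -
  have "bounded_borel_on {0..T} u" "bounded_borel_on {0..T} x"
    using assms unfolding adm_loading_iff by blast+
  with bounded_borel_ceded_share[OF assms] bounded_borel_ceded_share[OF assms(1,3,2)] show ?thesis
    unfolding rein_reward_def by (intro bounded_borel_on_diff bounded_borel_on_mult bounded_borel_on_power bounded_borel_on_const)
qed

lemma adm_loading_best_loading:
  assumes d0: "d0 > 0" and dl: "dl > 0" and lm: "lm \<ge> 0" and x: "adm_loading T x"
  shows "adm_loading T (\<lambda>s. best_loading d0 dl lm (x s))"
  unfolding adm_loading_iff
proof (intro conjI ballI bounded_borel_onI)
  have [measurable]: "x \<in> borel_measurable (restrict_space borel {0..T})"
    using x unfolding adm_loading_iff bounded_borel_on_def by blast
  show "(\<lambda>s. best_loading d0 dl lm (x s)) \<in> borel_measurable (restrict_space borel {0..T})"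
    unfolding best_loading_def by measurable
next
  fix s assume "s \<in> {0..T}"
  then have "x s > 0" using x unfolding adm_loading_iff by blast
  then show "best_loading d0 dl lm (x s) > 0"
    and "\<bar>best_loading d0 dl lm (x s)\<bar> \<le> (d0 + 2 * dl) / 2 + (1 + lm) * dl"
    using best_loading_pos[OF d0 dl lm \<open>x s > 0\<close>] best_loading_le[OF d0 dl lm \<open>x s > 0\<close>] by auto
qed

lemma pbar_bounds:
  assumes "d0 > 0" "th 1 > 0" "th 2 > 0"
  shows "0 \<le> pbar d0 th 1" "0 \<le> pbar d0 th 2" "pbar d0 th 1 + pbar d0 th 2 \<le> 1"
proof -
  define D where "D = d0 * th 1 + d0 * th 2 + 2 * th 1 * th 2"
  have D: "D > 0" unfolding D_def using assms by (simp add: add_pos_pos)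
  have "pbar d0 th 1 = d0 * th 2 / D" "pbar d0 th 2 = d0 * th 1 / D"
    unfolding pbar_def D_def other_simps by simp_all
  moreover have "d0 * th 2 + d0 * th 1 \<le> D" unfolding D_def using assms by simp
  ultimately show "0 \<le> pbar d0 th 1" "0 \<le> pbar d0 th 2" "pbar d0 th 1 + pbar d0 th 2 \<le> 1"
    using assms D by (simp_all add: add_divide_distrib[symmetric])
qed

lemma adm_reins_pbar_strat:
  assumes d0: "d0 > 0" and a1: "adm_loading T (theta 1)" and a2: "adm_loading T (theta 2)"
  shows "adm_reins T (pbar_strat d0 theta)"
  unfolding adm_reins_def set_borel_measurable_iff_restrict_space[OF borel_closed[OF closed_atLeastAtMost]]
proof (intro conjI ballI)
  have [measurable]: "theta 1 \<in> borel_measurable (restrict_space borel {0..T})"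
    "theta 2 \<in> borel_measurable (restrict_space borel {0..T})"
    using a1 a2 unfolding adm_loading_iff bounded_borel_on_def by blast+
  show "pbar_strat d0 theta 1 \<in> borel_measurable (restrict_space borel {0..T})"
    unfolding pbar_strat_def[abs_def] pbar_def other_simps by measurable
  show "pbar_strat d0 theta 2 \<in> borel_measurable (restrict_space borel {0..T})"
    unfolding pbar_strat_def[abs_def] pbar_def other_simps by measurable
next
  fix s assume "s \<in> {0..T}"
  then have "theta 1 s > 0" "theta 2 s > 0" using a1 a2 unfolding adm_loading_iff by blast+
  note bounds = pbar_bounds[of d0 "\<lambda>k. theta k s", OF d0 this]
  show "0 \<le> pbar_strat d0 theta 1 s" "0 \<le> pbar_strat d0 theta 2 s"
    "pbar_strat d0 theta 1 s \<le> 1" "pbar_strat d0 theta 2 s \<le> 1"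
    "0 \<le> pbar_strat d0 theta 1 s + pbar_strat d0 theta 2 s"
    "pbar_strat d0 theta 1 s + pbar_strat d0 theta 2 s \<le> 1"
    unfolding pbar_strat_def using bounds by linarith+
qed

lemma pbar_strat_eq_ceded_share:
  "i \<in> {1, 2} \<Longrightarrow> pbar_strat d0 theta i s = ceded_share d0 (theta i s) (theta (other i) s)"
  unfolding pbar_strat_def pbar_def ceded_share_def other_def by (auto simp: algebra_simps)

section \<open>Best responses\<close>

lemma J_rein_eq:
  assumes d0: "d0 > 0" and di: "d i > 0" and i: "i \<in> {1, 2}"
    and ai: "adm_loading T (theta i)" and aj: "adm_loading T (theta (other i))" and t: "t \<in> {0..T}"
  shows "J_rein sg T d0 d lam theta i t y =
    U (d i) (y + integral {t..T} (\<lambda>s. sg\<^sup>2 * rein_reward d0 (d i) (lam (other i)) (theta i s) (theta (other i) s)))"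
proof -
  define j where "j = other i"
  define p where "p = pbar_strat d0 theta"
  define a where "a s = theta i s * sg\<^sup>2 * (p i s)\<^sup>2 - lam j * (theta j s * sg\<^sup>2 * (p j s)\<^sup>2)" for s
  define b where "b s = (p i s - lam j * p j s)\<^sup>2" for s
  have j: "j \<in> {1, 2}" "other j = i" unfolding j_def by (rule other_mem[OF i], rule other_other[OF i])
  have "adm_loading T (theta 1)" "adm_loading T (theta 2)" using ai aj i by (auto simp: other_def)
  then have "adm_reins T p" unfolding p_def by (rule adm_reins_pbar_strat[OF d0])
  then have bb: "bounded_borel_on {0..T} (p i)" "bounded_borel_on {0..T} (p j)"
    "bounded_borel_on {0..T} (theta i)" "bounded_borel_on {0..T} (theta j)"
    using adm_reins_bounded_borel i j(1) ai aj unfolding j_def adm_loading_iff by blast+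
  have "bounded_borel_on {0..T} a" "bounded_borel_on {0..T} b"
    unfolding a_def[abs_def] b_def[abs_def]
    by (intro bounded_borel_on_diff bounded_borel_on_mult bounded_borel_on_power bounded_borel_on_const bb)+
  then have ia: "a integrable_on {t..T}" and ib: "b integrable_on {t..T}"
    using t by (auto intro: bounded_borel_on_integrable_on)
  have "J_rein sg T d0 d lam theta i t y = gauss_expect (U (d i)) (y + integral {t..T} a) (sg\<^sup>2 * integral {t..T} b)"
    unfolding J_rein_def Let_def j_def[symmetric] p_def[symmetric] a_def b_def ..
  also have "sg\<^sup>2 * integral {t..T} b = integral {t..T} (\<lambda>s. sg\<^sup>2 * b s)"
    by (rule integral_mult[OF ib])
  also have "gauss_expect (U (d i)) (y + integral {t..T} a) (integral {t..T} (\<lambda>s. sg\<^sup>2 * b s))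
      = U (d i) (y + integral {t..T} (\<lambda>s. a s - d i / 2 * (sg\<^sup>2 * b s)))"
    by (rule gauss_expect_U_integral[OF di ia integrable_on_mult_right[OF ib]]) (simp add: b_def)
  also have "integral {t..T} (\<lambda>s. a s - d i / 2 * (sg\<^sup>2 * b s))
      = integral {t..T} (\<lambda>s. sg\<^sup>2 * rein_reward d0 (d i) (lam j) (theta i s) (theta j s))"
    unfolding a_def b_def p_def rein_reward_def pbar_strat_eq_ceded_share[OF i] pbar_strat_eq_ceded_share[OF j(1)] j(2) j_def[symmetric]
    by (simp add: algebra_simps)
  finally show ?thesis unfolding j_def .
qed

lemma J_rein_update_eq:
  assumes "d0 > 0" "d i > 0" and i: "i \<in> {1, 2}"
    and "adm_loading T g" "adm_loading T (theta (other i))" "t \<in> {0..T}"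
  shows "J_rein sg T d0 d lam (theta(i := g)) i t y =
    U (d i) (y + integral {t..T} (\<lambda>s. sg\<^sup>2 * rein_reward d0 (d i) (lam (other i)) (g s) (theta (other i) s)))"
  using J_rein_eq[of d0 d i T "theta(i := g)"] assms other_neq[OF i] by simp

lemma best_response_best_loading:
  assumes d0: "d0 > 0" and di: "d i > 0" and i: "i \<in> {1, 2}" and lm: "lam (other i) \<ge> 0"
    and aj: "adm_loading T (theta (other i))" and af: "adm_loading T f"
    and f: "\<forall>s\<in>{0..T}. f s = best_loading d0 (d i) (lam (other i)) (theta (other i) s)"
  shows "best_response sg T d0 d lam theta i f"
  unfolding best_response_def
proof (intro conjI af ballI allI impI)
  fix t y g assume t: "t \<in> {0..T}" and ag: "adm_loading T g"
  let ?R = "\<lambda>h s. sg\<^sup>2 * rein_reward d0 (d i) (lam (other i)) (h s) (theta (other i) s)"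
  have "integral {t..T} (?R g) \<le> integral {t..T} (?R f)"
  proof (rule integral_le)
    have "?R h integrable_on {t..T}" if "adm_loading T h" for h
      using bounded_borel_on_integrable_on[OF bounded_borel_on_mult[OF bounded_borel_on_const
          bounded_borel_rein_reward[OF d0 that aj]]] t by auto
    then show "?R g integrable_on {t..T}" "?R f integrable_on {t..T}" using ag af by blast+
  next
    fix s assume "s \<in> {t..T}"
    then have s: "s \<in> {0..T}" using t by auto
    then have "theta (other i) s > 0" "g s > 0" using aj ag unfolding adm_loading_iff by blast+
    then show "?R g s \<le> ?R f s"
      unfolding f[rule_format, OF s] by (intro mult_left_mono rein_reward_le_best d0 di lm) auto
  qed
  then show "J_rein sg T d0 d lam (theta(i := g)) i t y \<le> J_rein sg T d0 d lam (theta(i := f)) i t y"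
    unfolding J_rein_update_eq[where theta = theta and d = d and i = i, OF d0 di i ag aj t]
      J_rein_update_eq[where theta = theta and d = d and i = i, OF d0 di i af aj t] U_le_iff[OF di]
    by simp
qed

lemma best_response_imp_integral_le:
  assumes d0: "d0 > 0" and di: "d i > 0" and i: "i \<in> {1, 2}" and T: "T \<ge> 0"
    and aj: "adm_loading T (theta (other i))" and ag: "adm_loading T g"
    and br: "best_response sg T d0 d lam theta i (theta i)"
  shows "integral {0..T} (\<lambda>s. sg\<^sup>2 * rein_reward d0 (d i) (lam (other i)) (g s) (theta (other i) s))
    \<le> integral {0..T} (\<lambda>s. sg\<^sup>2 * rein_reward d0 (d i) (lam (other i)) (theta i s) (theta (other i) s))"
proof -
  have t0: "0 \<in> {0..T}" using T by simp
  have ai: "adm_loading T (theta i)" using br unfolding best_response_def by blast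
  have "J_rein sg T d0 d lam (theta(i := g)) i 0 0 \<le> J_rein sg T d0 d lam (theta(i := theta i)) i 0 0"
    using br ag t0 unfolding best_response_def by blast
  then show ?thesis
    unfolding J_rein_update_eq[where theta = theta and d = d and i = i, OF d0 di i ag aj t0]
      J_rein_update_eq[where theta = theta and d = d and i = i, OF d0 di i ai aj t0] U_le_iff[OF di]
    by simp
qed

lemma best_response_imp_AE_best_loading:
  assumes sg: "sg > 0" and d0: "d0 > 0" and di: "d i > 0" and i: "i \<in> {1, 2}" and lm: "lam (other i) \<ge> 0"
    and T: "T \<ge> 0" and aj: "adm_loading T (theta (other i))"
    and br: "best_response sg T d0 d lam theta i (theta i)"
  shows "AE s in lborel. s \<in> {0..T} \<longrightarrow> theta i s = best_loading d0 (d i) (lam (other i)) (theta (other i) s)"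
proof -
  let ?best = "\<lambda>s. best_loading d0 (d i) (lam (other i)) (theta (other i) s)"
  let ?R = "\<lambda>h s. sg\<^sup>2 * rein_reward d0 (d i) (lam (other i)) (h s) (theta (other i) s)"
  define D where "D s = ?R ?best s - ?R (theta i) s" for s
  have ai: "adm_loading T (theta i)" using br unfolding best_response_def by blast
  have ab: "adm_loading T ?best" by (rule adm_loading_best_loading[OF d0 di lm aj])
  have bR: "bounded_borel_on {0..T} (?R h)" if "adm_loading T h" for h
    using bounded_borel_rein_reward[OF d0 that aj] by (intro bounded_borel_on_mult bounded_borel_on_const)
  have pos: "theta (other i) s > 0" "theta i s > 0" if "s \<in> {0..T}" for s
    using aj ai that unfolding adm_loading_iff by blast+
  have "AE s in lborel. s \<in> {0..T} \<longrightarrow> D s = 0"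
  proof (rule bounded_borel_on_AE_eq_0)
    show "bounded_borel_on {0..T} D"
      unfolding D_def[abs_def] using bR[OF ab] bR[OF ai] by (rule bounded_borel_on_diff)
    show "\<forall>s\<in>{0..T}. D s \<ge> 0"
      unfolding D_def using rein_reward_le_best[OF d0 di lm pos] by (simp add: mult_left_mono)
    have "integral {0..T} D = integral {0..T} (?R ?best) - integral {0..T} (?R (theta i))"
      unfolding D_def using bR[OF ab] bR[OF ai]
      by (intro integral_diff bounded_borel_on_integrable_on) auto
    then show "integral {0..T} D \<le> 0"
      using best_response_imp_integral_le[OF d0 di i T aj ab br] by simp
  qed
  then show ?thesis
  proof (rule eventually_mono)
    fix s assume "s \<in> {0..T} \<longrightarrow> D s = 0"
    then show "s \<in> {0..T} \<longrightarrow> theta i s = ?best s"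
      using rein_reward_less_best[OF d0 di lm pos] sg unfolding D_def by force
  qed
qed

(* The insurer's loading payments plus d_0/2 times its squared volatility, per unit sg^2
   (see J_ins_eq). *)
definition insurer_cost :: "real \<Rightarrow> real \<Rightarrow> real \<Rightarrow> real \<Rightarrow> real \<Rightarrow> real" where
  "insurer_cost d0 a1 a2 q1 q2 = a1 * q1\<^sup>2 + a2 * q2\<^sup>2 + d0 / 2 * (1 - q1 - q2)\<^sup>2"

lemma insurer_cost_pbar_le:
  assumes "d0 > 0" "th 1 > 0" "th 2 > 0"
  shows "insurer_cost d0 (th 1) (th 2) (pbar d0 th 1) (pbar d0 th 2) \<le> insurer_cost d0 (th 1) (th 2) q1 q2"
proof -
  define D where "D = d0 * th 1 + d0 * th 2 + 2 * th 1 * th 2"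
  define p1 where "p1 = pbar d0 th 1"
  define p2 where "p2 = pbar d0 th 2"
  have D: "D > 0" unfolding D_def using assms by (simp add: add_pos_pos)
  have p12: "p1 = d0 * th 2 / D" "p2 = d0 * th 1 / D"
    unfolding p1_def p2_def pbar_def D_def other_simps by simp_all
  have "1 - p1 - p2 = (D - d0 * th 2 - d0 * th 1) / D"
    unfolding p12 using D by (simp add: field_simps)
  then have p3: "1 - p1 - p2 = 2 * th 1 * th 2 / D" by (simp add: D_def)
  have foc: "2 * th 1 * p1 = d0 * (1 - p1 - p2)" "2 * th 2 * p2 = d0 * (1 - p1 - p2)"
    unfolding p3 unfolding p12 by simp_all
  have "insurer_cost d0 (th 1) (th 2) q1 q2 - insurer_cost d0 (th 1) (th 2) p1 p2
      = th 1 * (q1 - p1)\<^sup>2 + th 2 * (q2 - p2)\<^sup>2 + d0 / 2 * ((q1 - p1) + (q2 - p2))\<^sup>2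
        + (q1 - p1) * (2 * th 1 * p1 - d0 * (1 - p1 - p2)) + (q2 - p2) * (2 * th 2 * p2 - d0 * (1 - p1 - p2))"
    unfolding insurer_cost_def by (simp add: algebra_simps power2_eq_square)
  also have "\<dots> \<ge> 0" unfolding foc using assms by simp
  finally show ?thesis unfolding p1_def p2_def by simp
qed

lemma J_ins_eq:
  assumes d0: "d0 > 0" and a1: "adm_loading T (theta 1)" and a2: "adm_loading T (theta 2)"
    and q: "adm_reins T q" and t: "t \<in> {0..T}"
  shows "J_ins c mu sg T d0 theta q t x =
    U d0 (x + integral {t..T} (\<lambda>s. c - mu - sg\<^sup>2 * insurer_cost d0 (theta 1 s) (theta 2 s) (q 1 s) (q 2 s)))"
proof -
  define a where "a s = c - mu - theta 1 s * sg\<^sup>2 * (q 1 s)\<^sup>2 - theta 2 s * sg\<^sup>2 * (q 2 s)\<^sup>2" for s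
  define b where "b s = (1 - q 1 s - q 2 s)\<^sup>2" for s
  have bb: "bounded_borel_on {0..T} (q 1)" "bounded_borel_on {0..T} (q 2)"
    "bounded_borel_on {0..T} (theta 1)" "bounded_borel_on {0..T} (theta 2)"
    using adm_reins_bounded_borel[OF q] a1 a2 unfolding adm_loading_iff by blast+
  have "bounded_borel_on {0..T} a" "bounded_borel_on {0..T} b"
    unfolding a_def[abs_def] b_def[abs_def]
    by (intro bounded_borel_on_diff bounded_borel_on_mult bounded_borel_on_power bounded_borel_on_const bb)+
  then have ia: "a integrable_on {t..T}" and ib: "b integrable_on {t..T}"
    using t by (auto intro: bounded_borel_on_integrable_on)
  have "J_ins c mu sg T d0 theta q t x = gauss_expect (U d0) (x + integral {t..T} a) (sg\<^sup>2 * integral {t..T} b)"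
    unfolding J_ins_def a_def b_def ..
  also have "sg\<^sup>2 * integral {t..T} b = integral {t..T} (\<lambda>s. sg\<^sup>2 * b s)"
    by (rule integral_mult[OF ib])
  also have "gauss_expect (U d0) (x + integral {t..T} a) (integral {t..T} (\<lambda>s. sg\<^sup>2 * b s))
      = U d0 (x + integral {t..T} (\<lambda>s. a s - d0 / 2 * (sg\<^sup>2 * b s)))"
    by (rule gauss_expect_U_integral[OF d0 ia integrable_on_mult_right[OF ib]]) (simp add: b_def)
  also have "integral {t..T} (\<lambda>s. a s - d0 / 2 * (sg\<^sup>2 * b s))
      = integral {t..T} (\<lambda>s. c - mu - sg\<^sup>2 * insurer_cost d0 (theta 1 s) (theta 2 s) (q 1 s) (q 2 s))"
    unfolding a_def b_def insurer_cost_def by (simp add: algebra_simps)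
  finally show ?thesis .
qed

lemma insurer_optimal_pbar_strat:
  assumes d0: "d0 > 0" and a1: "adm_loading T (theta 1)" and a2: "adm_loading T (theta 2)"
  shows "insurer_optimal c mu sg T d0 theta (pbar_strat d0 theta)"
  unfolding insurer_optimal_def
proof (intro conjI ballI allI impI)
  show p: "adm_reins T (pbar_strat d0 theta)" by (rule adm_reins_pbar_strat[OF d0 a1 a2])
  fix t x q assume t: "t \<in> {0..T}" and q: "adm_reins T q"
  let ?G = "\<lambda>q s. c - mu - sg\<^sup>2 * insurer_cost d0 (theta 1 s) (theta 2 s) (q 1 s) (q 2 s)"
  have int: "?G q integrable_on {t..T}" if "adm_reins T q" for q
  proof -
    have "bounded_borel_on {0..T} (q 1)" "bounded_borel_on {0..T} (q 2)"
      "bounded_borel_on {0..T} (theta 1)" "bounded_borel_on {0..T} (theta 2)"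
      using adm_reins_bounded_borel[OF that] a1 a2 unfolding adm_loading_iff by blast+
    then have "bounded_borel_on {0..T} (?G q)"
      unfolding insurer_cost_def
      by (intro bounded_borel_on_diff bounded_borel_on_add bounded_borel_on_mult bounded_borel_on_power bounded_borel_on_const)
    then show ?thesis using t by (auto intro: bounded_borel_on_integrable_on)
  qed
  have "integral {t..T} (?G q) \<le> integral {t..T} (?G (pbar_strat d0 theta))"
  proof (rule integral_le[OF int[OF q] int[OF p]])
    fix s assume "s \<in> {t..T}"
    then have "theta 1 s > 0" "theta 2 s > 0" using t a1 a2 unfolding adm_loading_iff by auto
    from insurer_cost_pbar_le[of d0 "\<lambda>k. theta k s", OF d0 this]
    show "?G q s \<le> ?G (pbar_strat d0 theta) s"
      unfolding pbar_strat_def by (simp add: mult_left_mono)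
  qed
  then show "J_ins c mu sg T d0 theta q t x \<le> J_ins c mu sg T d0 theta (pbar_strat d0 theta) t x"
    unfolding J_ins_eq[OF d0 a1 a2 q t] J_ins_eq[OF d0 a1 a2 p t] U_le_iff[OF d0] by simp
qed

section \<open>Equilibria\<close>

lemma nash_eq_of_fixpoint:
  assumes d0: "d0 > 0" and d: "\<forall>i\<in>{1, 2}. d i > 0" and lam: "\<forall>i\<in>{1, 2}. lam i \<ge> 0"
    and adm: "\<forall>i\<in>{1, 2}. adm_loading T (theta i)"
    and fp: "\<forall>i\<in>{1, 2}. \<forall>s\<in>{0..T}. theta i s = varphi d0 d lam i (theta (other i) s)"
  shows "nash_eq sg T d0 d lam theta"
  unfolding nash_eq_def
proof
  fix i :: nat assume i: "i \<in> {1, 2}"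
  show "best_response sg T d0 d lam theta i (theta i)"
    using d0 d lam adm fp i other_mem[OF i]
    by (intro best_response_best_loading) (auto simp: varphi_eq_best_loading)
qed

lemma nash_eq_imp_AE_fixpoint:
  assumes sg: "sg > 0" and d0: "d0 > 0" and d: "\<forall>i\<in>{1, 2}. d i > 0" and lam: "\<forall>i\<in>{1, 2}. lam i \<ge> 0"
    and T: "T \<ge> 0" and nash: "nash_eq sg T d0 d lam theta"
  shows "AE s in lborel. s \<in> {0..T} \<longrightarrow> theta 1 s > 0 \<and> theta 2 s > 0
    \<and> theta 1 s = varphi d0 d lam 1 (theta 2 s) \<and> theta 2 s = varphi d0 d lam 2 (theta 1 s)"
proof -
  have adm: "adm_loading T (theta i)" if "i \<in> {1, 2}" for i
    using nash that unfolding nash_eq_def best_response_def by blast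
  have "\<forall>i\<in>{1, 2}. AE s in lborel. s \<in> {0..T} \<longrightarrow> theta i s > 0 \<and> theta i s = varphi d0 d lam i (theta (other i) s)"
  proof
    fix i :: nat assume i: "i \<in> {1, 2}"
    have "AE s in lborel. s \<in> {0..T} \<longrightarrow> theta i s = varphi d0 d lam i (theta (other i) s)"
      unfolding varphi_eq_best_loading
      using nash i d lam adm[OF other_mem[OF i]] other_mem[OF i] sg d0 T unfolding nash_eq_def
      by (intro best_response_imp_AE_best_loading) auto
    then show "AE s in lborel. s \<in> {0..T} \<longrightarrow> theta i s > 0 \<and> theta i s = varphi d0 d lam i (theta (other i) s)"
      by (rule eventually_mono) (use adm[OF i, unfolded adm_loading_iff] in blast)
  qed
  then have "AE s in lborel. \<forall>i\<in>{1, 2}. s \<in> {0..T} \<longrightarrow> theta i s > 0 \<and> theta i s = varphi d0 d lam i (theta (other i) s)"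
    by (rule eventually_ball_finite[rotated]) simp
  then show ?thesis by (rule eventually_mono) (unfold ball_one_two other_simps, blast)
qed

lemma varphi_fixpoint_unique:
  assumes d0: "d0 > 0" and d: "\<forall>i\<in>{1, 2}. d i > 0" and lam: "\<forall>i\<in>{1, 2}. lam i \<ge> 0"
    and lam0: "lam 1 * lam 2 = 0" and i: "i \<in> {1, 2}"
  shows "\<exists>!(a, b). a > 0 \<and> b > 0 \<and> a = varphi d0 d lam i b \<and> b = varphi d0 d lam (other i) a"
proof -
  have pos: "d i > 0" "d (other i) > 0" "lam i \<ge> 0" "lam (other i) \<ge> 0"
    using d lam i other_mem[OF i] by auto
  have "lam i = 0 \<or> lam (other i) = 0" using lam0 i by (auto simp: other_def)
  then show ?thesis
  proof
    assume "lam i = 0"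
    then show ?thesis
      using best_loading_fixpoint_unique[OF d0 pos(1,2,4)]
      unfolding varphi_eq_best_loading other_other[OF i] by simp
  next
    assume "lam (other i) = 0"
    then have "\<exists>!(b, a). b > 0 \<and> a > 0 \<and> b = varphi d0 d lam (other i) a \<and> a = varphi d0 d lam i b"
      using best_loading_fixpoint_unique[OF d0 pos(2,1,3)]
      unfolding varphi_eq_best_loading other_other[OF i] by simp
    then show ?thesis
      unfolding Ex1_case_prod_swap[where P = "\<lambda>a b. a > 0 \<and> b > 0 \<and> a = varphi d0 d lam i b \<and> b = varphi d0 d lam (other i) a"]
      by (simp only: conj_ac)
  qed
qed

lemma varphi_fixpoint_explicit:
  assumes d0: "d0 > 0" and d1: "d 1 > 0" and d2: "d 2 > 0" and "lam 1 = 0" "lam 2 = 0"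
    and a1: "a1 > 0" and a2: "a2 > 0" and "a1 = varphi d0 d lam 1 a2" "a2 = varphi d0 d lam 2 a1"
  shows "a1 = d 1 / 2 + 1/2 * sqrt ((d0 + d 1) / (d0 + d 2) * (d0 * d 1 + d0 * d 2 + d 1 * d 2))"
    and "a2 = d 2 / 2 + 1/2 * sqrt ((d0 + d 2) / (d0 + d 1) * (d0 * d 1 + d0 * d 2 + d 1 * d 2))"
proof -
  have e1: "a1 = best_loading d0 (d 1) 0 a2" and e2: "a2 = best_loading d0 (d 2) 0 a1"
    using assms(8,9) unfolding varphi_eq_best_loading other_simps assms(4,5) .
  show "a2 = d 2 / 2 + 1/2 * sqrt ((d0 + d 2) / (d0 + d 1) * (d0 * d 1 + d0 * d 2 + d 1 * d 2))"
    by (rule best_loading_fixpoint_explicit[OF d0 d1 d2 a1 a2 e1 e2])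
  have "d0 * d 2 + d0 * d 1 + d 2 * d 1 = d0 * d 1 + d0 * d 2 + d 1 * d 2" by simp
  with best_loading_fixpoint_explicit[OF d0 d2 d1 a2 a1 e2 e1]
  show "a1 = d 1 / 2 + 1/2 * sqrt ((d0 + d 1) / (d0 + d 2) * (d0 * d 1 + d0 * d 2 + d 1 * d 2))"
    by simp
qed

theorem theorem3p7:
  fixes c mu sg T d0 :: real and d lam :: "nat \<Rightarrow> real"
  assumes "c > 0" "mu > 0" "sg > 0" "T > 0" "d0 > 0"
    and "d 1 > 0" "d 2 > 0"
    and "lam 1 \<ge> 0" "lam 2 \<ge> 0" "lam 1 * lam 2 = 0"
  shows "\<exists>theta. nash_eq sg T d0 d lam theta
     \<and> (\<forall>theta'. nash_eq sg T d0 d lam theta' \<longrightarrow>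
          (\<forall>i\<in>{1,2}. AE s in lborel. s \<in> {0..T} \<longrightarrow> theta' i s = theta i s))
     \<and> insurer_optimal c mu sg T d0 theta (pbar_strat d0 theta)
     \<and> (\<forall>i\<in>{1,2}. lam i = 0 \<and> lam (other i) > 0 \<longrightarrow>
          (\<exists>!(a, b). a > 0 \<and> b > 0 \<and>
               a = varphi d0 d lam i b \<and> b = varphi d0 d lam (other i) a)
          \<and> (\<forall>s\<in>{0..T}. theta i s = varphi d0 d lam i (theta (other i) s)
                        \<and> theta (other i) s = varphi d0 d lam (other i) (theta i s)))
     \<and> (lam 1 = 0 \<and> lam 2 = 0 \<longrightarrow>
          (\<forall>s\<in>{0..T}.
             theta 1 s = d 1 / 2 + 1/2 * sqrt ((d0 + d 1) / (d0 + d 2) * (d0 * d 1 + d0 * d 2 + d 1 * d 2))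
           \<and> theta 2 s = d 2 / 2 + 1/2 * sqrt ((d0 + d 2) / (d0 + d 1) * (d0 * d 1 + d0 * d 2 + d 1 * d 2))))"
proof -
  have d: "\<forall>i\<in>{1, 2}. d i > 0" and lam: "\<forall>i\<in>{1, 2}. lam i \<ge> 0" using assms by auto
  note fp_unique = varphi_fixpoint_unique[OF \<open>d0 > 0\<close> d lam \<open>lam 1 * lam 2 = 0\<close>]
  obtain a1 a2 where a: "a1 > 0" "a2 > 0" "a1 = varphi d0 d lam 1 a2" "a2 = varphi d0 d lam 2 a1"
    and uniq: "\<forall>b1 b2. b1 > 0 \<and> b2 > 0 \<and> b1 = varphi d0 d lam 1 b2 \<and> b2 = varphi d0 d lam 2 b1
                 \<longrightarrow> b1 = a1 \<and> b2 = a2"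
    using fp_unique[of 1] unfolding Ex1_case_prod_iff other_simps by blast
  define theta where "theta = (\<lambda>(k :: nat) (s :: real). if k = 1 then a1 else a2)"
  have th: "theta 1 = (\<lambda>s. a1)" "theta 2 = (\<lambda>s. a2)" unfolding theta_def by simp_all
  have adm: "adm_loading T (theta 1)" "adm_loading T (theta 2)"
    unfolding th using a(1,2) by (simp_all add: adm_loading_const)
  have fp: "\<forall>i\<in>{1, 2}. \<forall>s. theta i s = varphi d0 d lam i (theta (other i) s)"
    unfolding ball_one_two other_simps th using a(3,4) by blast
  show ?thesis
  proof (intro exI[of _ theta] conjI allI impI ballI)
    show "nash_eq sg T d0 d lam theta"
      using nash_eq_of_fixpoint[OF \<open>d0 > 0\<close> d lam] adm fp unfolding ball_one_two by blast
    show "insurer_optimal c mu sg T d0 theta (pbar_strat d0 theta)"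
      by (rule insurer_optimal_pbar_strat[OF \<open>d0 > 0\<close> adm])
  next
    fix theta' and i :: nat assume "nash_eq sg T d0 d lam theta'" "i \<in> {1, 2}"
    from nash_eq_imp_AE_fixpoint[OF \<open>sg > 0\<close> \<open>d0 > 0\<close> d lam less_imp_le[OF \<open>T > 0\<close>] this(1)]
    have "AE s in lborel. s \<in> {0..T} \<longrightarrow> theta' 1 s = a1 \<and> theta' 2 s = a2"
      by (rule eventually_mono) (use uniq in blast)
    then show "AE s in lborel. s \<in> {0..T} \<longrightarrow> theta' i s = theta i s"
      by (rule eventually_mono) (use \<open>i \<in> {1, 2}\<close> in \<open>auto simp: theta_def\<close>)
  next
    fix i :: nat assume "i \<in> {1, 2}"
    then show "\<exists>!(a, b). a > 0 \<and> b > 0 \<and> a = varphi d0 d lam i b \<and> b = varphi d0 d lam (other i) a"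
      by (rule fp_unique)
  next
    fix i :: nat and s assume "i \<in> {1, 2}"
    then show "theta i s = varphi d0 d lam i (theta (other i) s)"
      and "theta (other i) s = varphi d0 d lam (other i) (theta i s)"
      using fp other_mem other_other by metis+
  next
    fix s assume "lam 1 = 0 \<and> lam 2 = 0"
    with varphi_fixpoint_explicit[OF \<open>d0 > 0\<close> \<open>d 1 > 0\<close> \<open>d 2 > 0\<close> _ _ a]
    show "theta 1 s = d 1 / 2 + 1/2 * sqrt ((d0 + d 1) / (d0 + d 2) * (d0 * d 1 + d0 * d 2 + d 1 * d 2))"
      and "theta 2 s = d 2 / 2 + 1/2 * sqrt ((d0 + d 2) / (d0 + d 1) * (d0 * d 1 + d0 * d 2 + d 1 * d 2))"
      by (simp_all add: theta_def)
  qed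
qed

end
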